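(* Let $\Gamma$ be a rational graph of degree $m=-Z^2\ge 3$. Then its complexity $\sum_{v}(\mathrm{val}(v)-2)$, the sum over all vertices $v$ of valency $\mathrm{val}(v)\ge 3$, is at most $m-2$.
   Context: A rational graph is a finite tree with vertices $E_i$ weighted by integers $-b_i\le -2$, such that the symmetric matrix with diagonal entries $E_i\cdot E_i=-b_i$ and off-diagonal entries $E_i\cdot E_j=1$ if adjacent and $0$ otherwise is negative definite, and such that the fundamental cycle $Z$ (smallest nonzero integer cycle with $Z\cdot E_i\le0$ for all $i$) satisfies $p_a(Z)=0$, where $p_a(A)=1+\tfrac12(A\cdot A+\sum a_i(b_i-2))$ for $A=\sum a_iE_i$. The degree is $-Z^2$; for a rational graph $-Z^2-2=\sum z_i(b_i-2)$ where $Z=\sum z_iE_i$. Valency means the number of neighbours in the tree. *)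

theory Defs
  imports Complex_Main
begin

text \<open>A weighted graph: vertex set V, symmetric irreflexive adjacency E on V,
  weights b (vertex v has self-intersection -b v).  Cycles are integer
  functions on V (values outside V are irrelevant).\<close>

definition graph_ok :: "'a set \<Rightarrow> ('a \<Rightarrow> 'a \<Rightarrow> bool) \<Rightarrow> bool" where
  "graph_ok V E \<longleftrightarrow> finite V \<and> V \<noteq> {} \<and>
     (\<forall>u v. E u v \<longrightarrow> u \<in> V \<and> v \<in> V) \<and>
     (\<forall>u v. E u v \<longrightarrow> E v u) \<and> (\<forall>v. \<not> E v v)"

definition connected_in :: "'a set \<Rightarrow> ('a \<Rightarrow> 'a \<Rightarrow> bool) \<Rightarrow> bool" where
  "connected_in V E \<longleftrightarrow> (\<forall>u\<in>V. \<forall>v\<in>V. (\<lambda>x y. E x y)\<^sup>*\<^sup>* u v)"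

text \<open>A tree: a connected graph in which every edge is a bridge
  (removing it disconnects its endpoints), i.e. connected and acyclic.\<close>
definition is_tree :: "'a set \<Rightarrow> ('a \<Rightarrow> 'a \<Rightarrow> bool) \<Rightarrow> bool" where
  "is_tree V E \<longleftrightarrow> graph_ok V E \<and> connected_in V E \<and>
     (\<forall>u v. E u v \<longrightarrow>
        \<not> (\<lambda>x y. E x y \<and> {x, y} \<noteq> {u, v})\<^sup>*\<^sup>* u v)"

definition inter_coeff :: "('a \<Rightarrow> 'a \<Rightarrow> bool) \<Rightarrow> ('a \<Rightarrow> int) \<Rightarrow> 'a \<Rightarrow> 'a \<Rightarrow> int" where
  "inter_coeff E b i j = (if i = j then - b i else if E i j then 1 else 0)"

definition inter :: "'a set \<Rightarrow> ('a \<Rightarrow> 'a \<Rightarrow> bool) \<Rightarrow> ('a \<Rightarrow> int) \<Rightarrow> ('a \<Rightarrow> int) \<Rightarrow> ('a \<Rightarrow> int) \<Rightarrow> int" where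
  "inter V E b A B = (\<Sum>i\<in>V. \<Sum>j\<in>V. A i * B j * inter_coeff E b i j)"

definition neg_definite :: "'a set \<Rightarrow> ('a \<Rightarrow> 'a \<Rightarrow> bool) \<Rightarrow> ('a \<Rightarrow> int) \<Rightarrow> bool" where
  "neg_definite V E b \<longleftrightarrow> (\<forall>x :: 'a \<Rightarrow> real. (\<exists>i\<in>V. x i \<noteq> 0) \<longrightarrow>
      (\<Sum>i\<in>V. \<Sum>j\<in>V. x i * x j * real_of_int (inter_coeff E b i j)) < 0)"

definition basis_cycle :: "'a \<Rightarrow> 'a \<Rightarrow> int" where
  "basis_cycle i = (\<lambda>j. if j = i then 1 else 0)"

definition anti_nef :: "'a set \<Rightarrow> ('a \<Rightarrow> 'a \<Rightarrow> bool) \<Rightarrow> ('a \<Rightarrow> int) \<Rightarrow> ('a \<Rightarrow> int) \<Rightarrow> bool" where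
  "anti_nef V E b A \<longleftrightarrow> (\<exists>i\<in>V. A i \<noteq> 0) \<and>
      (\<forall>i\<in>V. inter V E b A (basis_cycle i) \<le> 0)"

definition fundamental_cycle :: "'a set \<Rightarrow> ('a \<Rightarrow> 'a \<Rightarrow> bool) \<Rightarrow> ('a \<Rightarrow> int) \<Rightarrow> ('a \<Rightarrow> int) \<Rightarrow> bool" where
  "fundamental_cycle V E b Z \<longleftrightarrow> anti_nef V E b Z \<and>
      (\<forall>A. anti_nef V E b A \<longrightarrow> (\<forall>i\<in>V. Z i \<le> A i))"

definition p_a :: "'a set \<Rightarrow> ('a \<Rightarrow> 'a \<Rightarrow> bool) \<Rightarrow> ('a \<Rightarrow> int) \<Rightarrow> ('a \<Rightarrow> int) \<Rightarrow> real" where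
  "p_a V E b A = 1 + real_of_int (inter V E b A A + (\<Sum>i\<in>V. A i * (b i - 2))) / 2"

definition valency :: "'a set \<Rightarrow> ('a \<Rightarrow> 'a \<Rightarrow> bool) \<Rightarrow> 'a \<Rightarrow> nat" where
  "valency V E v = card {w\<in>V. E v w}"

definition complexity :: "'a set \<Rightarrow> ('a \<Rightarrow> 'a \<Rightarrow> bool) \<Rightarrow> int" where
  "complexity V E = (\<Sum>v\<in>{v\<in>V. valency V E v \<ge> 3}. int (valency V E v) - 2)"

definition rational_graph :: "'a set \<Rightarrow> ('a \<Rightarrow> 'a \<Rightarrow> bool) \<Rightarrow> ('a \<Rightarrow> int) \<Rightarrow> ('a \<Rightarrow> int) \<Rightarrow> bool" where
  "rational_graph V E b Z \<longleftrightarrow> is_tree V E \<and> (\<forall>i\<in>V. b i \<ge> 2) \<and>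
     neg_definite V E b \<and> fundamental_cycle V E b Z \<and> p_a V E b Z = 0"

end

theory Submission
  imports Defs "HOL-Library.Indicator_Function"
begin

(*
  Write q(A) = A.A + sum_i a_i (b_i - 2) = 2 p_a(A) - 2 ("genus form").  For a
  rational graph with fundamental cycle Z the proof rests on three facts:
    (1) Z >= 1 on every vertex (negative definiteness and connectivity);
    (2) q(D) <= -2 for every cycle 0 < D <= Z (Laufer's computation-sequence
        argument: raise D along a vertex E_k with D.E_k > 0 until D = Z);
    (3) for an indicator cycle, q(1_X) = 2 e(X) - 2|X|, where e(X) is the number
        of edges inside X.
  Applied to D = 1_X, (2) says every induced subgraph is a forest; applied to
  D = 1_V + 1_S with Z >= 2 on S it bounds the degrees inside S.  Splitting the
  vertices of valency >= 2 into those of multiplicity >= 2 and those of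
  multiplicity 1, and using Z.E_v <= 0 at the latter, an edge count shows
  complexity <= sum_v Z_v (b_v - 2) = -Z^2 - 2 as soon as some b_v >= 3, which
  is forced by -Z^2 >= 3.
*)

definition genus_form ::
    "'a set \<Rightarrow> ('a \<Rightarrow> 'a \<Rightarrow> bool) \<Rightarrow> ('a \<Rightarrow> int) \<Rightarrow> ('a \<Rightarrow> int) \<Rightarrow> int" where
  "genus_form V E b A = inter V E b A A + (\<Sum>i\<in>V. A i * (b i - 2))"

lemma p_a_genus_form: "p_a V E b A = 1 + real_of_int (genus_form V E b A) / 2"
  by (simp add: p_a_def genus_form_def)

lemma inter_sym:
  assumes "\<And>u v. E u v \<Longrightarrow> E v u"
  shows "inter V E b A B = inter V E b B A"
proof -
  have "inter V E b A B = (\<Sum>i\<in>V. \<Sum>j\<in>V. B j * A i * inter_coeff E b j i)"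
    unfolding inter_def
    by (intro sum.cong refl) (auto simp: inter_coeff_def ac_simps dest: assms)
  also have "\<dots> = inter V E b B A"
    unfolding inter_def by (rule sum.swap)
  finally show ?thesis .
qed

lemma inter_add_left: "inter V E b (\<lambda>i. A i + B i) C = inter V E b A C + inter V E b B C"
  unfolding inter_def by (simp add: distrib_right sum.distrib)

lemma inter_add_right: "inter V E b C (\<lambda>i. A i + B i) = inter V E b C A + inter V E b C B"
  unfolding inter_def by (simp add: distrib_left distrib_right sum.distrib)

lemma genus_form_add:
  assumes "\<And>u v. E u v \<Longrightarrow> E v u"
  shows "genus_form V E b (\<lambda>i. A i + B i)
       = genus_form V E b A + genus_form V E b B + 2 * inter V E b A B"
  using inter_sym[of E V b B A] assms
  unfolding genus_form_def inter_add_left inter_add_right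
  by (simp add: distrib_right sum.distrib)

lemma genus_form_cong:
  assumes "\<forall>i\<in>V. A i = B i"
  shows "genus_form V E b A = genus_form V E b B"
  unfolding genus_form_def inter_def using assms by simp

lemma inter_basis:
  assumes "finite V" "k \<in> V"
  shows "inter V E b A (basis_cycle k) = (\<Sum>i\<in>V. A i * inter_coeff E b i k)"
proof -
  have "(\<Sum>j\<in>V. A i * basis_cycle k j * inter_coeff E b i j)
      = (\<Sum>j\<in>V. if j = k then A i * inter_coeff E b i k else 0)" for i
    by (rule sum.cong) (auto simp: basis_cycle_def)
  then show ?thesis unfolding inter_def using assms by simp
qed

lemma inter_expand_right:
  assumes "finite V"
  shows "inter V E b A B = (\<Sum>k\<in>V. B k * inter V E b A (basis_cycle k))"
proof -
  have "inter V E b A B = (\<Sum>k\<in>V. \<Sum>i\<in>V. B k * (A i * inter_coeff E b i k))"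
    unfolding inter_def by (subst sum.swap) (simp add: ac_simps)
  also have "\<dots> = (\<Sum>k\<in>V. B k * inter V E b A (basis_cycle k))"
    using assms by (simp add: inter_basis sum_distrib_left)
  finally show ?thesis .
qed

lemma genus_form_basis:
  assumes "finite V" "k \<in> V"
  shows "genus_form V E b (basis_cycle k) = -2"
proof -
  have "(\<Sum>i\<in>V. basis_cycle k i * inter_coeff E b i k)
      = (\<Sum>i\<in>V. if i = k then - b k else 0)"
    by (rule sum.cong) (auto simp: basis_cycle_def inter_coeff_def)
  moreover have "(\<Sum>i\<in>V. basis_cycle k i * (b i - 2))
      = (\<Sum>i\<in>V. if i = k then b k - 2 else 0)"
    by (rule sum.cong) (auto simp: basis_cycle_def)
  ultimately show ?thesis
    unfolding genus_form_def inter_basis[OF assms] using assms by simp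
qed

(* Off-diagonal entries are nonnegative, so A.E_k is monotone in A away from k. *)
lemma inter_basis_mono:
  assumes "finite V" "k \<in> V" "\<forall>i\<in>V. A i \<le> B i" "A k = B k"
  shows "inter V E b A (basis_cycle k) \<le> inter V E b B (basis_cycle k)"
  unfolding inter_basis[OF assms(1,2)]
proof (rule sum_mono)
  fix i assume "i \<in> V"
  then show "A i * inter_coeff E b i k \<le> B i * inter_coeff E b i k"
    using assms(3,4) by (cases "i = k") (auto simp: inter_coeff_def)
qed

lemma neg_definite_int:
  assumes "neg_definite V E b" "\<exists>i\<in>V. x i \<noteq> 0"
  shows "inter V E b x x < 0"
proof -
  have "real_of_int (inter V E b x x) < 0"
    using assms(1)[unfolded neg_definite_def, rule_format, of "\<lambda>i. real_of_int (x i)"]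
      assms(2)
    by (simp add: inter_def)
  then show ?thesis by simp
qed

(* A cycle with A.E_k <= 0 for all k is effective: pair its negative part N with
   A + N and A to contradict N.N < 0. *)
lemma anti_nef_nonneg:
  assumes fin: "finite V" and nd: "neg_definite V E b"
    and anti: "\<forall>k\<in>V. inter V E b A (basis_cycle k) \<le> 0" and i: "i \<in> V"
  shows "A i \<ge> 0"
proof (rule ccontr)
  define N where "N = (\<lambda>i. max 0 (- A i))"
  assume "\<not> A i \<ge> 0"
  then have "inter V E b N N < 0"
    using i by (intro neg_definite_int[OF nd] bexI[of _ i]) (auto simp: N_def)
  moreover have "inter V E b A N \<le> 0"
    using anti by (subst inter_expand_right[OF fin])
      (intro sum_nonpos mult_nonneg_nonpos, simp_all add: N_def)
  moreover have "inter V E b (\<lambda>i. A i + N i) N \<ge> 0"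
  proof -
    have "(A i + N i) * N j * inter_coeff E b i j \<ge> 0" for i j
    proof (cases "i = j")
      case True
      have "(A j + N j) * N j = 0" by (simp add: N_def max_def)
      then show ?thesis using True by auto
    next
      case False
      have "A i + N i \<ge> 0" "N j \<ge> 0" "inter_coeff E b i j \<ge> 0"
        using False by (auto simp: N_def inter_coeff_def)
      then show ?thesis by (intro mult_nonneg_nonneg)
    qed
    then show ?thesis unfolding inter_def by (intro sum_nonneg)
  qed
  ultimately show False
    using inter_add_left[of V E b A N N] by linarith
qed

definition nbrs :: "('a \<Rightarrow> 'a \<Rightarrow> bool) \<Rightarrow> 'a set \<Rightarrow> 'a \<Rightarrow> int" where
  "nbrs E X v = (\<Sum>w\<in>X. if E v w then 1 else 0)"

definition double_edges :: "('a \<Rightarrow> 'a \<Rightarrow> bool) \<Rightarrow> 'a set \<Rightarrow> int" where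
  "double_edges E X = (\<Sum>v\<in>X. nbrs E X v)"

lemma nbrs_nonneg: "nbrs E X v \<ge> 0"
  unfolding nbrs_def by (rule sum_nonneg) simp

lemma nbrs_union:
  assumes "A \<inter> B = {}" "finite A" "finite B"
  shows "nbrs E (A \<union> B) v = nbrs E A v + nbrs E B v"
  unfolding nbrs_def using assms by (simp add: sum.union_disjoint)

lemma nbrs_handshake:
  assumes "\<And>u v. E u v \<Longrightarrow> E v u"
  shows "(\<Sum>u\<in>A. nbrs E B u) = (\<Sum>w\<in>B. nbrs E A w)"
proof -
  have "(\<Sum>u\<in>A. nbrs E B u) = (\<Sum>u\<in>A. \<Sum>w\<in>B. if E w u then 1 else 0)"
    unfolding nbrs_def by (intro sum.cong refl) (auto dest: assms)
  also have "\<dots> = (\<Sum>w\<in>B. nbrs E A w)"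
    unfolding nbrs_def by (rule sum.swap)
  finally show ?thesis .
qed

lemma double_edges_union:
  assumes "A \<inter> B = {}" "finite A" "finite B" "\<And>u v. E u v \<Longrightarrow> E v u"
  shows "double_edges E (A \<union> B)
       = double_edges E A + 2 * (\<Sum>v\<in>B. nbrs E A v) + double_edges E B"
proof -
  have "double_edges E (A \<union> B) = (\<Sum>v\<in>A \<union> B. nbrs E A v + nbrs E B v)"
    unfolding double_edges_def using assms by (simp add: nbrs_union)
  also have "\<dots> = (\<Sum>v\<in>A. nbrs E A v) + (\<Sum>v\<in>A. nbrs E B v)
                 + ((\<Sum>v\<in>B. nbrs E A v) + (\<Sum>v\<in>B. nbrs E B v))"
    using assms by (simp add: sum.union_disjoint sum.distrib)
  also have "(\<Sum>v\<in>A. nbrs E B v) = (\<Sum>v\<in>B. nbrs E A v)"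
    by (rule nbrs_handshake) (rule assms(4))
  finally show ?thesis unfolding double_edges_def by simp
qed

lemma valency_nbrs:
  assumes "finite V"
  shows "int (valency V E v) = nbrs E V v"
  unfolding valency_def nbrs_def using assms by (simp add: sum.inter_filter[symmetric])

(* Vertices of valency 2 contribute 0, so the complexity sums d(v) - 2 over d(v) >= 2. *)
lemma complexity_nbrs:
  assumes "finite V"
  shows "complexity V E = (\<Sum>v\<in>{v\<in>V. 2 \<le> nbrs E V v}. nbrs E V v - 2)"
proof -
  have "complexity V E = (\<Sum>v\<in>V. if 3 \<le> valency V E v then int (valency V E v) - 2 else 0)"
    unfolding complexity_def using assms by (simp add: sum.inter_filter)
  also have "\<dots> = (\<Sum>v\<in>V. if 2 \<le> nbrs E V v then nbrs E V v - 2 else 0)"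
    by (intro sum.cong refl) (auto simp: valency_nbrs[OF assms, symmetric])
  finally show ?thesis using assms by (simp add: sum.inter_filter)
qed

lemma connected_exit_edge:
  assumes "connected_in V E" "x \<in> X" "y \<notin> X" "x \<in> V" "y \<in> V"
  shows "\<exists>a w. a \<in> X \<and> w \<notin> X \<and> E a w"
proof -
  have "E\<^sup>*\<^sup>* x y" using assms by (simp add: connected_in_def)
  then show ?thesis using assms(2,3) by (induction rule: rtranclp_induct) auto
qed

lemma connected_grow_step:
  assumes gr: "graph_ok V E" and conn: "connected_in V E"
    and X: "X \<subseteq> V" "X \<noteq> {}" "X \<noteq> V"
  shows "\<exists>w\<in>V - X. double_edges E X + 2 \<le> double_edges E (X \<union> {w})"
proof -
  have sym: "\<And>u v. E u v \<Longrightarrow> E v u" and irr: "\<And>v. \<not> E v v"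
    and edge: "\<And>u v. E u v \<Longrightarrow> v \<in> V" and finX: "finite X"
    using gr X(1) finite_subset by (auto simp: graph_ok_def)
  obtain x y where "x \<in> X" "y \<in> V" "y \<notin> X" using X by blast
  then obtain a w where aw: "a \<in> X" "w \<notin> X" "E a w"
    using connected_exit_edge[OF conn] X(1) by blast
  have "(if E w a then 1 else 0) \<le> nbrs E X w"
    unfolding nbrs_def by (rule member_le_sum[OF aw(1)]) (use finX in auto)
  then have "1 \<le> nbrs E X w" using aw sym by auto
  moreover have "double_edges E (X \<union> {w}) = double_edges E X + 2 * nbrs E X w"
    using double_edges_union[of X "{w}"] aw finX sym
    by (simp add: double_edges_def nbrs_def irr)
  ultimately show ?thesis using aw edge by (intro bexI[of _ w]) auto
qed

(* A connected graph on n vertices has at least n - 1 edges: grow a vertex set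
   one neighbour at a time. *)
lemma connected_double_edges:
  assumes gr: "graph_ok V E" and conn: "connected_in V E"
  shows "double_edges E V \<ge> 2 * int (card V) - 2"
proof -
  have fin: "finite V" and irr: "\<And>v. \<not> E v v" using gr by (auto simp: graph_ok_def)
  have grow: "\<exists>X\<subseteq>V. card X = k \<and> double_edges E X \<ge> 2 * int k - 2"
    if "1 \<le> k" "k \<le> card V" for k
    using that
  proof (induction k rule: nat_induct_at_least)
    case base
    obtain v where "v \<in> V" using gr by (auto simp: graph_ok_def)
    moreover have "double_edges E {v} = 0" by (simp add: double_edges_def nbrs_def irr)
    ultimately show ?case by (intro exI[of _ "{v}"]) auto
  next
    case (Suc k)
    then obtain X where X: "X \<subseteq> V" "card X = k" "double_edges E X \<ge> 2 * int k - 2"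
      by auto
    have "X \<noteq> {}" "X \<noteq> V" using X(2) Suc by auto
    then obtain w where "w \<in> V - X" "double_edges E X + 2 \<le> double_edges E (X \<union> {w})"
      using connected_grow_step[OF gr conn X(1)] by blast
    moreover have "finite X" using X(1) fin finite_subset by blast
    ultimately show ?case using X by (intro exI[of _ "X \<union> {w}"]) auto
  qed
  obtain X where "X \<subseteq> V" "card X = card V" "double_edges E X \<ge> 2 * int (card V) - 2"
    using grow[of "card V"] gr fin by (auto simp: graph_ok_def Suc_le_eq card_gt_0_iff)
  then show ?thesis using card_subset_eq[OF fin] by blast
qed

lemma leaves_double_edges:
  assumes "finite V" "\<And>u v. E u v \<Longrightarrow> E v u" "L \<subseteq> V" "\<forall>v\<in>L. nbrs E V v \<le> 1"
  shows "double_edges E V \<le> double_edges E (V - L) + 2 * int (card L)"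
proof -
  have finL: "finite L" using assms finite_subset by blast
  have V: "(V - L) \<union> L = V" using assms(3) by blast
  have "nbrs E V v = nbrs E (V - L) v + nbrs E L v" for v
    using nbrs_union[of "V - L" L E v] assms(1) finL by (simp only: V) auto
  then have "2 * nbrs E (V - L) v + nbrs E L v \<le> 2" if "v \<in> L" for v
    using assms(4) that nbrs_nonneg[of E "V - L" v] nbrs_nonneg[of E L v] by force
  then have "(\<Sum>v\<in>L. 2 * nbrs E (V - L) v + nbrs E L v) \<le> (\<Sum>v\<in>L. 2)"
    by (rule sum_mono)
  moreover have "double_edges E V
      = double_edges E (V - L) + 2 * (\<Sum>v\<in>L. nbrs E (V - L) v) + double_edges E L"
    using double_edges_union[of "V - L" L E] assms(1,2) finL by (simp only: V) auto
  ultimately show ?thesis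
    by (simp add: double_edges_def sum.distrib sum_distrib_left)
qed

lemma inter_indicator:
  assumes "finite V" "X \<subseteq> V" "Y \<subseteq> V" "\<And>v. \<not> E v v"
  shows "inter V E b (indicator X) (indicator Y)
       = (\<Sum>i\<in>X. nbrs E Y i - (if i \<in> Y then b i else 0))"
proof -
  have "inter V E b (indicator X) (indicator Y)
      = (\<Sum>i\<in>V. indicator X i * (\<Sum>j\<in>V. indicator Y j * inter_coeff E b i j))"
    unfolding inter_def by (simp add: sum_distrib_left mult.assoc)
  also have "\<dots> = (\<Sum>i\<in>X. \<Sum>j\<in>Y. inter_coeff E b i j)"
    using assms(1-3) by (simp add: indicator_def Int_absorb1)
  also have "\<dots> = (\<Sum>i\<in>X. nbrs E Y i - (if i \<in> Y then b i else 0))"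
  proof (rule sum.cong[OF refl])
    fix i
    have "(\<Sum>j\<in>Y. inter_coeff E b i j)
        = (\<Sum>j\<in>Y. (if E i j then 1 else 0) - (if i = j then b i else 0))"
      using assms(4) by (intro sum.cong refl) (auto simp: inter_coeff_def)
    also have "\<dots> = nbrs E Y i - (if i \<in> Y then b i else 0)"
      using finite_subset[OF assms(3,1)] by (simp add: sum_subtractf nbrs_def)
    finally show "(\<Sum>j\<in>Y. inter_coeff E b i j) = nbrs E Y i - (if i \<in> Y then b i else 0)"
      .
  qed
  finally show ?thesis .
qed

lemma genus_form_indicator:
  assumes "finite V" "X \<subseteq> V" "\<And>v. \<not> E v v"
  shows "genus_form V E b (indicator X) = double_edges E X - 2 * int (card X)"
proof -
  have "(\<Sum>i\<in>V. indicator X i * (b i - 2)) = (\<Sum>i\<in>X. b i - 2)"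
    using assms(1,2) by (simp add: indicator_def Int_absorb1)
  then show ?thesis
    unfolding genus_form_def inter_indicator[OF assms(1,2,2,3)] double_edges_def
    by (simp add: sum_subtractf)
qed

locale rational_tree =
  fixes V :: "'a set" and E :: "'a \<Rightarrow> 'a \<Rightarrow> bool" and b Z :: "'a \<Rightarrow> int"
  assumes rational: "rational_graph V E b Z"
begin

lemma graph: "graph_ok V E"
  using rational by (simp add: rational_graph_def is_tree_def)

lemma finite_V: "finite V"
  using graph by (simp add: graph_ok_def)

lemma sym: "E u v \<Longrightarrow> E v u"
  using graph by (simp add: graph_ok_def)

lemma irrefl: "\<not> E v v"
  using graph by (simp add: graph_ok_def)

lemma edge_in_V: "E u v \<Longrightarrow> u \<in> V \<and> v \<in> V"
  using graph by (simp add: graph_ok_def)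

lemma connected: "connected_in V E"
  using rational by (simp add: rational_graph_def is_tree_def)

lemma weight_ge_2: "i \<in> V \<Longrightarrow> b i \<ge> 2"
  using rational by (simp add: rational_graph_def)

lemma neg_definite: "neg_definite V E b"
  using rational by (simp add: rational_graph_def)

lemma Z_anti_nef: "anti_nef V E b Z"
  using rational by (simp add: rational_graph_def fundamental_cycle_def)

lemma Z_minimal: "anti_nef V E b A \<Longrightarrow> i \<in> V \<Longrightarrow> Z i \<le> A i"
  using rational by (simp add: rational_graph_def fundamental_cycle_def)

lemma genus_form_Z: "genus_form V E b Z = -2"
proof -
  have "1 + real_of_int (genus_form V E b Z) / 2 = 0"
    using rational by (simp add: rational_graph_def p_a_genus_form)
  then show ?thesis by linarith
qed

(* Z is effective, being anti-nef for a negative definite form. *)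
lemma Z_nonneg: "i \<in> V \<Longrightarrow> Z i \<ge> 0"
  using Z_anti_nef
  by (intro anti_nef_nonneg[OF finite_V neg_definite]) (auto simp: anti_nef_def)

(* Z has full support: at a vertex x with Z_x = 0 next to a vertex y with Z_y > 0
   we would get Z.E_x >= Z_y > 0. *)
lemma Z_pos:
  assumes i: "i \<in> V"
  shows "Z i \<ge> 1"
proof (rule ccontr)
  assume "\<not> Z i \<ge> 1"
  then have "Z i = 0" using Z_nonneg[OF i] by simp
  moreover obtain u where "u \<in> V" "Z u \<noteq> 0" using Z_anti_nef by (auto simp: anti_nef_def)
  ultimately obtain x y where xy: "Z x = 0" "Z y \<noteq> 0" "E x y"
    using connected_exit_edge[OF connected, of i "{j. Z j = 0}" u] i by auto
  have x: "x \<in> V" and y: "y \<in> V" using edge_in_V[OF xy(3)] by auto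
  have "Z y * inter_coeff E b y x \<le> (\<Sum>j\<in>V. Z j * inter_coeff E b j x)"
  proof (rule member_le_sum[OF y _ finite_V])
    fix j assume "j \<in> V - {y}"
    then show "0 \<le> Z j * inter_coeff E b j x"
      using Z_nonneg xy(1) by (cases "j = x") (auto simp: inter_coeff_def)
  qed
  moreover have "Z y * inter_coeff E b y x > 0"
    using xy Z_nonneg[OF y] sym irrefl by (auto simp: inter_coeff_def)
  ultimately have "inter V E b Z (basis_cycle x) > 0"
    unfolding inter_basis[OF finite_V x] by linarith
  then show False using Z_anti_nef x by (auto simp: anti_nef_def)
qed

(* Laufer: every cycle 0 < D <= Z has q(D) <= -2.  If D is anti-nef then D = Z by
   minimality; otherwise D.E_k > 0 for some k with D_k < Z_k, and D + E_k is closer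
   to Z with q(D + E_k) = q(D) - 2 + 2 D.E_k >= q(D). *)
lemma genus_form_below_Z:
  assumes "\<forall>i\<in>V. 0 \<le> D i \<and> D i \<le> Z i" "\<exists>i\<in>V. D i \<noteq> 0"
  shows "genus_form V E b D \<le> -2"
  using assms
proof (induction "nat (\<Sum>i\<in>V. Z i - D i)" arbitrary: D rule: less_induct)
  case less
  show ?case
  proof (cases "anti_nef V E b D")
    case True
    then have "\<forall>i\<in>V. D i = Z i"
      using Z_minimal[OF True] less.prems by (auto intro: order.antisym)
    then have "genus_form V E b D = genus_form V E b Z" by (rule genus_form_cong)
    then show ?thesis using genus_form_Z by simp
  next
    case False
    then obtain k where k: "k \<in> V" "inter V E b D (basis_cycle k) > 0"
      using less.prems by (auto simp: anti_nef_def not_le)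
    have "D k < Z k"
    proof (rule ccontr)
      assume "\<not> D k < Z k"
      then have "D k = Z k" using less.prems k by force
      then have "inter V E b D (basis_cycle k) \<le> inter V E b Z (basis_cycle k)"
        using less.prems by (intro inter_basis_mono[OF finite_V k(1)]) auto
      then show False using k Z_anti_nef by (auto simp: anti_nef_def)
    qed
    define D' where "D' = (\<lambda>i. D i + basis_cycle k i)"
    have "genus_form V E b D \<le> genus_form V E b D'"
      using genus_form_add[of E V b D "basis_cycle k", OF sym]
        genus_form_basis[OF finite_V k(1)] k(2)
      unfolding D'_def by simp
    moreover have "genus_form V E b D' \<le> -2"
    proof (rule less.hyps)
      show "\<forall>i\<in>V. 0 \<le> D' i \<and> D' i \<le> Z i"
        using less.prems \<open>D k < Z k\<close> by (auto simp: D'_def basis_cycle_def)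
      show "\<exists>i\<in>V. D' i \<noteq> 0"
        using k less.prems by (auto simp: D'_def basis_cycle_def intro!: bexI[of _ k])
      have "(\<Sum>i\<in>V. Z i - D' i) = (\<Sum>i\<in>V. Z i - D i) - 1"
        using finite_V k(1) by (simp add: D'_def sum_subtractf sum.distrib basis_cycle_def)
      moreover have "Z k - D k \<le> (\<Sum>i\<in>V. Z i - D i)"
        using less.prems by (intro member_le_sum[OF k(1) _ finite_V]) auto
      ultimately show "nat (\<Sum>i\<in>V. Z i - D' i) < nat (\<Sum>i\<in>V. Z i - D i)"
        using \<open>D k < Z k\<close> by linarith
    qed
    ultimately show ?thesis by simp
  qed
qed

lemma induced_forest:
  assumes "X \<subseteq> V" "X \<noteq> {}"
  shows "double_edges E X \<le> 2 * int (card X) - 2"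
proof -
  have "genus_form V E b (indicator X) \<le> -2"
    using assms by (intro genus_form_below_Z) (auto simp: indicator_def Z_pos Z_nonneg)
  then show ?thesis
    using genus_form_indicator[where E = E, OF finite_V assms(1) irrefl] by simp
qed

(* Being connected and a forest, the graph has exactly |V| - 1 edges. *)
lemma double_edges_V: "double_edges E V = 2 * int (card V) - 2"
  using induced_forest[of V] connected_double_edges[OF graph connected] graph
  by (simp add: graph_ok_def)

(* Apply Laufer to 1_V + 1_X where Z >= 2 on X: 2 e(X) - 2|X| <= 2 sum_X (b - d). *)
lemma heavy_bound:
  assumes X: "X \<subseteq> V" and Z2: "\<forall>x\<in>X. 2 \<le> Z x"
  shows "double_edges E X - 2 * int (card X) \<le> 2 * (\<Sum>x\<in>X. b x - nbrs E V x)"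
proof -
  have "genus_form V E b (\<lambda>i. indicator X i + indicator V i) \<le> -2"
    using X Z2 graph by (intro genus_form_below_Z) (auto simp: indicator_def graph_ok_def Z_pos)
  moreover have "inter V E b (indicator X) (indicator V) = (\<Sum>x\<in>X. nbrs E V x - b x)"
    using X
    by (simp add: inter_indicator[where E = E, OF finite_V X _ irrefl] subsetD cong: sum.cong)
  ultimately show ?thesis
    using genus_form_add[of E V b "indicator X" "indicator V", OF sym] double_edges_V
      genus_form_indicator[where E = E, OF finite_V X irrefl]
      genus_form_indicator[where E = E, OF finite_V subset_refl irrefl]
    by (simp add: sum_subtractf)
qed

(* Z.E_v <= 0 reads: the multiplicities of the neighbours of v sum to at most b_v Z_v. *)
lemma neighbour_weights:
  assumes v: "v \<in> V"
  shows "(\<Sum>w\<in>V. if E v w then Z w else 0) \<le> b v * Z v"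
proof -
  have "inter V E b Z (basis_cycle v)
      = (\<Sum>w\<in>V. (if E v w then Z w else 0) - (if w = v then b v * Z v else 0))"
    unfolding inter_basis[OF finite_V v]
    by (intro sum.cong refl) (auto simp: inter_coeff_def irrefl dest: sym)
  also have "\<dots> = (\<Sum>w\<in>V. if E v w then Z w else 0) - b v * Z v"
    using v finite_V by (simp add: sum_subtractf)
  finally show ?thesis using Z_anti_nef v by (auto simp: anti_nef_def)
qed

definition heavy :: "'a set" where
  "heavy = {v\<in>V. 2 \<le> Z v \<and> 2 \<le> nbrs E V v}"

definition light :: "'a set" where
  "light = {v\<in>V. Z v = 1 \<and> 2 \<le> nbrs E V v}"

definition ends :: "'a set" where
  "ends = {v\<in>V. nbrs E V v \<le> 1}"

(* Since Z >= 1, these three classes partition V. *)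
lemma vertex_classes:
  "heavy \<subseteq> V" "light \<subseteq> V" "ends \<subseteq> V" "heavy \<inter> light = {}"
  "heavy \<union> light = V - ends" "finite heavy" "finite light" "finite ends"
proof -
  show sub: "heavy \<subseteq> V" "light \<subseteq> V" "ends \<subseteq> V"
    by (auto simp: heavy_def light_def ends_def)
  then show "finite heavy" "finite light" "finite ends"
    using finite_subset[OF _ finite_V] by auto
  show "heavy \<inter> light = {}"
    by (auto simp: heavy_def light_def)
  have "Z v = 1 \<or> 2 \<le> Z v" if "v \<in> V" for v
    using Z_pos[OF that] by linarith
  then show "heavy \<union> light = V - ends"
    unfolding heavy_def light_def ends_def by auto
qed

lemma sum_vertex_classes:
  "(\<Sum>v\<in>V. f v) = (\<Sum>v\<in>heavy. f v) + (\<Sum>v\<in>light. f v) + (\<Sum>v\<in>ends. f v)"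
proof -
  have V: "(heavy \<union> light) \<union> ends = V" and disj: "(heavy \<union> light) \<inter> ends = {}"
    using vertex_classes by blast+
  have "(\<Sum>v\<in>(heavy \<union> light) \<union> ends. f v)
      = (\<Sum>v\<in>heavy. f v) + (\<Sum>v\<in>light. f v) + (\<Sum>v\<in>ends. f v)"
    using vertex_classes(4,6,7,8) disj by (simp add: sum.union_disjoint)
  then show ?thesis by (simp only: V)
qed

lemma complexity_classes:
  "complexity V E = (\<Sum>v\<in>heavy. nbrs E V v - 2) + (\<Sum>v\<in>light. nbrs E V v - 2)"
proof -
  have "{v\<in>V. 2 \<le> nbrs E V v} = heavy \<union> light"
    unfolding vertex_classes(5) by (auto simp: ends_def)
  then show ?thesis
    using complexity_nbrs[OF finite_V] vertex_classes(4,6,7) by (simp add: sum.union_disjoint)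
qed

(* At a vertex of multiplicity 1, each neighbour contributes at least 1 to the
   bound of neighbour_weights, and each heavy neighbour at least 2. *)
lemma light_degree:
  assumes v: "v \<in> light"
  shows "nbrs E V v + nbrs E heavy v \<le> b v"
proof -
  have vV: "v \<in> V" and Zv: "Z v = 1" using v by (auto simp: light_def)
  have "(\<Sum>w\<in>V. (if E v w then 1 else 0) + indicator heavy w * (if E v w then 1 else 0))
      \<le> (\<Sum>w\<in>V. if E v w then Z w else 0)"
    using Z_pos by (intro sum_mono) (auto simp: indicator_def heavy_def)
  also have "\<dots> \<le> b v" using neighbour_weights[OF vV] Zv by simp
  finally show ?thesis
    using vertex_classes(1) finite_V
    by (simp add: sum.distrib nbrs_def indicator_def Int_absorb1)
qed

(* Edge count: |V| - 1 edges, at most one per vertex of valency <= 1, and the light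
   vertices induce a forest. *)
lemma edge_budget:
  "2 * int (card heavy) - 2 * of_bool (light = {})
     \<le> double_edges E heavy + 2 * (\<Sum>v\<in>light. nbrs E heavy v)"
proof -
  have "double_edges E V \<le> double_edges E (V - ends) + 2 * int (card ends)"
    using finite_V sym vertex_classes(3) by (intro leaves_double_edges) (auto simp: ends_def)
  moreover have "double_edges E (V - ends)
      = double_edges E heavy + 2 * (\<Sum>v\<in>light. nbrs E heavy v) + double_edges E light"
    unfolding vertex_classes(5)[symmetric]
    using vertex_classes sym by (intro double_edges_union) auto
  moreover have "double_edges E light \<le> 2 * int (card light) - 2 * of_bool (light \<noteq> {})"
    using induced_forest[OF vertex_classes(2)] by (cases "light = {}") (auto simp: double_edges_def)
  moreover have "card V = card heavy + card light + card ends"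
    using sum_vertex_classes[of "\<lambda>_. 1::nat"] by simp
  ultimately show ?thesis using double_edges_V by (cases "light = {}") auto
qed

(* Lower bound for sum Z_v (b_v - 2) using Z >= 2 on heavy and Z >= 1 elsewhere. *)
lemma weighted_sum_classes:
  "2 * (\<Sum>v\<in>heavy. b v - 2) + (\<Sum>v\<in>light. b v - 2) + (\<Sum>v\<in>ends. b v - 2)
     \<le> (\<Sum>v\<in>V. Z v * (b v - 2))"
proof -
  have "2 * (\<Sum>v\<in>heavy. b v - 2) \<le> (\<Sum>v\<in>heavy. Z v * (b v - 2))"
    unfolding sum_distrib_left
    using weight_ge_2 by (intro sum_mono mult_right_mono) (auto simp: heavy_def)
  moreover have "(\<Sum>v\<in>light. b v - 2) = (\<Sum>v\<in>light. Z v * (b v - 2))"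
    by (intro sum.cong refl) (simp add: light_def)
  moreover have "(\<Sum>v\<in>ends. b v - 2) \<le> (\<Sum>v\<in>ends. Z v * (b v - 2))"
  proof (rule sum_mono)
    fix v assume "v \<in> ends"
    then have "1 \<le> Z v" "0 \<le> b v - 2" using vertex_classes(3) Z_pos weight_ge_2 by auto
    then show "b v - 2 \<le> Z v * (b v - 2)" using mult_right_mono by fastforce
  qed
  ultimately show ?thesis using sum_vertex_classes[of "\<lambda>v. Z v * (b v - 2)"] by linarith
qed

lemma complexity_le_weighted_sum:
  assumes "\<exists>v\<in>V. b v \<ge> 3"
  shows "complexity V E \<le> (\<Sum>v\<in>V. Z v * (b v - 2))"
proof -
  have heavy_split: "(\<Sum>v\<in>heavy. b v - 2)
      = (\<Sum>v\<in>heavy. b v - nbrs E V v) + (\<Sum>v\<in>heavy. nbrs E V v - 2)"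
    by (simp add: sum.distrib[symmetric])
  have "(\<Sum>v\<in>light. (nbrs E V v - 2) + nbrs E heavy v) \<le> (\<Sum>v\<in>light. b v - 2)"
    using light_degree by (intro sum_mono) force
  then have light_sum: "(\<Sum>v\<in>light. nbrs E V v - 2) + (\<Sum>v\<in>light. nbrs E heavy v)
      \<le> (\<Sum>v\<in>light. b v - 2)"
    by (simp add: sum.distrib)
  have heavy: "double_edges E heavy - 2 * int (card heavy)
      \<le> 2 * (\<Sum>v\<in>heavy. b v - nbrs E V v)"
    using vertex_classes(1) by (intro heavy_bound) (auto simp: heavy_def)
  have nonneg: "(\<Sum>v\<in>heavy. b v - 2) \<ge> 0" "(\<Sum>v\<in>ends. b v - 2) \<ge> 0"
    using weight_ge_2 vertex_classes by (auto intro!: sum_nonneg)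
  have excess: "(\<Sum>v\<in>heavy. b v - 2) + (\<Sum>v\<in>light. b v - 2) + (\<Sum>v\<in>ends. b v - 2) \<ge> 1"
  proof -
    obtain u where u: "u \<in> V" "b u \<ge> 3" using assms by blast
    have "b u - 2 \<le> (\<Sum>v\<in>V. b v - 2)"
      using weight_ge_2 by (intro member_le_sum[OF u(1) _ finite_V]) auto
    then show ?thesis using u(2) sum_vertex_classes[of "\<lambda>v. b v - 2"] by linarith
  qed
  (* The edge budget and heavy_bound leave a deficit of at most 1, occurring only
     when there are no light vertices; it is paid for by some b_v >= 3. *)
  define no_light :: int where "no_light = of_bool (light = {})"
  have budget:
    "- no_light \<le> (\<Sum>v\<in>heavy. b v - nbrs E V v) + (\<Sum>v\<in>light. nbrs E heavy v)"
    using heavy edge_budget[folded no_light_def] by linarith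
  have "complexity V E + ((\<Sum>v\<in>heavy. b v - nbrs E V v) + (\<Sum>v\<in>light. nbrs E heavy v))
      + ((\<Sum>v\<in>heavy. b v - 2) + (\<Sum>v\<in>ends. b v - 2)) \<le> (\<Sum>v\<in>V. Z v * (b v - 2))"
    using heavy_split light_sum complexity_classes weighted_sum_classes by linarith
  moreover have "no_light \<le> (\<Sum>v\<in>heavy. b v - 2) + (\<Sum>v\<in>ends. b v - 2)"
    using nonneg excess by (cases "light = {}") (auto simp: no_light_def)
  ultimately show ?thesis using budget by linarith
qed

end

(* Since sum_v Z_v (b_v - 2) = -Z^2 - 2, the degree m = -Z^2 >= 3 forces some b_v >= 3. *)
theorem theorem3:
  fixes V :: "'a set" and E :: "'a \<Rightarrow> 'a \<Rightarrow> bool" and b Z :: "'a \<Rightarrow> int" and m :: int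
  assumes "rational_graph V E b Z"
    and "m = - inter V E b Z Z"
    and "m \<ge> 3"
  shows "complexity V E \<le> m - 2"
proof -
  interpret rational_tree V E b Z by unfold_locales (rule assms(1))
  have degree: "(\<Sum>v\<in>V. Z v * (b v - 2)) = m - 2"
    using genus_form_Z assms(2) by (simp add: genus_form_def)
  have "\<exists>v\<in>V. b v \<ge> 3"
  proof (rule ccontr)
    assume "\<not> (\<exists>v\<in>V. b v \<ge> 3)"
    then have "\<forall>v\<in>V. b v = 2" using weight_ge_2 by force
    then show False using degree assms(3) by simp
  qed
  then show ?thesis using complexity_le_weighted_sum degree by simp
qed

end
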